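(* Let $\Lambda>1$ and let $(v_1,v_2)$ be a solution with positive components of \[ -v_1''+v_1^3-v_1+\Lambda v_2^2v_1=0,\qquad -v_2''+v_2^3-v_2+\Lambda v_1^2v_2=0,\qquad z\in\mathbb{R}, \] \[ (v_1,v_2)\to(0,1)\ \text{as } z\to-\infty,\qquad (v_1,v_2)\to(1,0)\ \text{as } z\to+\infty. \] Then $v_1'>0$ on $\mathbb{R}$ implies $v_2'<0$ on $\mathbb{R}$, and conversely $v_2'<0$ on $\mathbb{R}$ implies $v_1'>0$ on $\mathbb{R}$. *)

theory Defs
  imports "HOL-Analysis.Analysis"
begin

end

theory Submission
  imports Defs "HOL-Real_Asymp.Real_Asymp"
begin

(* Let phi = v2'/v2 and N = v2 v2'' - v2'^2, so that phi' = N / v2^2. The equation for v2 gives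
   N' = 2 v2^2 (v2 v2' + \<Lambda> v1 v1'), which is positive wherever phi >= 0 once v1' > 0 (only \<Lambda> > 0
   matters). So if phi >= 0 and N >= 0 at a point, N stays positive to its right and phi increases
   there; mirrored, if phi >= 0 and N <= 0 at a point, phi increases towards the left.
   Assume v2'(z0) >= 0. If N(z0) >= 0, then v2' >= 0 on [z0, \<infinity>), contradicting v2 -> 0 at +\<infinity>.
   If N(z0) <= 0, then v2'/v2 is bounded below by a positive constant on a left half-line, so
   v2 -> 0 at -\<infinity>, contradicting v2 -> 1. The converse implication is the same statement for the
   reflected solution (v2(-z), v1(-z)). *)

lemma first_nonpos_point:
  fixes q :: "real \<Rightarrow> real"
  assumes cont: "\<And>x. isCont q x"
    and "d > 0" and pos: "\<And>x. a < x \<Longrightarrow> x < a + d \<Longrightarrow> q x > 0"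
    and "a < b" and "q b \<le> 0"
  shows "\<exists>s>a. q s \<le> 0 \<and> (\<forall>x. a < x \<longrightarrow> x < s \<longrightarrow> q x > 0)"
proof -
  define Z where "Z = {x. a + d / 2 \<le> x \<and> q x \<le> 0}"
  have "closed Z"
    unfolding Z_def using cont
    by (intro closed_Collect_conj closed_Collect_le continuous_intros continuous_at_imp_continuous_on) auto
  moreover have "bdd_below Z"
    by (auto simp: Z_def bdd_below_def)
  moreover have "b \<in> Z"
    using pos[of b] \<open>a < b\<close> \<open>q b \<le> 0\<close> \<open>d > 0\<close> by (force simp: Z_def)
  ultimately have "Inf Z \<in> Z"
    using closed_contains_Inf by blast
  then have "a < Inf Z" "q (Inf Z) \<le> 0"
    using \<open>d > 0\<close> by (auto simp: Z_def)
  moreover have "q x > 0" if "a < x" "x < Inf Z" for x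
  proof (cases "x < a + d / 2")
    case True
    then show ?thesis using pos that \<open>d > 0\<close> by auto
  next
    case False
    then have "x \<notin> Z"
      using that \<open>bdd_below Z\<close> by (metis cInf_lower leD)
    then show ?thesis using False by (auto simp: Z_def)
  qed
  ultimately show ?thesis by blast
qed

lemma derivative_barrier_pos:
  fixes p q p' q' :: "real \<Rightarrow> real"
  assumes p: "\<And>x. (p has_real_derivative p' x) (at x)"
    and q: "\<And>x. (q has_real_derivative q' x) (at x)"
    and p'_pos: "\<And>x. q x > 0 \<Longrightarrow> p' x > 0"
    and q'_pos: "\<And>x. p x \<ge> 0 \<Longrightarrow> q' x > 0"
    and pa: "p a \<ge> 0" and qa: "q a \<ge> 0" and "a < b"
  shows "q b > 0"
proof (rule ccontr)
  assume "\<not> q b > 0"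
  then have "q b \<le> 0" by simp
  obtain d where "d > 0" and d: "\<And>h. 0 < h \<Longrightarrow> h < d \<Longrightarrow> q a < q (a + h)"
    using DERIV_pos_inc_right[OF q q'_pos[OF pa]] by blast
  have "q x > 0" if "a < x" "x < a + d" for x
    using d[of "x - a"] that qa by simp
  then obtain s where "a < s" "q s \<le> 0" and q_pos: "\<And>x. a < x \<Longrightarrow> x < s \<Longrightarrow> q x > 0"
    using first_nonpos_point[of q d a b] DERIV_isCont[OF q] \<open>d > 0\<close> \<open>a < b\<close> \<open>q b \<le> 0\<close>
    by blast
  have "p a < p s"
  proof (rule DERIV_pos_imp_increasing_open[OF \<open>a < s\<close>])
    show "\<exists>y. (p has_real_derivative y) (at x) \<and> y > 0" if "a < x" "x < s" for x
      using p p'_pos q_pos that by blast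
    show "continuous_on {a..s} p"
      using p by (meson DERIV_isCont continuous_at_imp_continuous_on)
  qed
  then obtain e where "e > 0" and e: "\<And>h. 0 < h \<Longrightarrow> h < e \<Longrightarrow> q (s - h) < q s"
    using DERIV_pos_inc_left[OF q q'_pos] pa by (meson less_le_not_le order_trans)
  define h where "h = min e (s - a) / 2"
  have "0 < h" "h < e" "a < s - h" "s - h < s"
    using \<open>e > 0\<close> \<open>a < s\<close> by (auto simp: h_def min_def field_simps)
  then have "q (s - h) < 0" and "q (s - h) > 0"
    using e \<open>q s \<le> 0\<close> q_pos by (fastforce, simp)
  then show False by simp
qed

lemma derivative_barrier_strict_mono_on:
  fixes p q p' q' :: "real \<Rightarrow> real"
  assumes p: "\<And>x. (p has_real_derivative p' x) (at x)"
    and "\<And>x. (q has_real_derivative q' x) (at x)"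
    and p'_pos: "\<And>x. q x > 0 \<Longrightarrow> p' x > 0"
    and "\<And>x. p x \<ge> 0 \<Longrightarrow> q' x > 0"
    and "p a \<ge> 0" and "q a \<ge> 0"
  shows "strict_mono_on {a..} p"
proof (rule strict_mono_onI)
  fix x y assume "x \<in> {a..}" "y \<in> {a..}" "x < y"
  show "p x < p y"
  proof (rule DERIV_pos_imp_increasing_open[OF \<open>x < y\<close>])
    show "\<exists>l. (p has_real_derivative l) (at t) \<and> l > 0" if "x < t" "t < y" for t
      using derivative_barrier_pos[OF assms, of t] \<open>x \<in> {a..}\<close> that p p'_pos by force
    show "continuous_on {x..y} p"
      using p by (meson DERIV_isCont continuous_at_imp_continuous_on)
  qed
qed

lemma derivative_barrier_strict_antimono_on:
  fixes p q p' q' :: "real \<Rightarrow> real"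
  assumes p: "\<And>x. (p has_real_derivative p' x) (at x)"
    and q: "\<And>x. (q has_real_derivative q' x) (at x)"
    and "\<And>x. q x < 0 \<Longrightarrow> p' x < 0"
    and "\<And>x. p x \<ge> 0 \<Longrightarrow> q' x > 0"
    and "p a \<ge> 0" and "q a \<le> 0"
  shows "strict_antimono_on {..a} p"
proof -
  have "strict_mono_on {-a..} (\<lambda>x. p (- x))"
  proof (rule derivative_barrier_strict_mono_on)
    show "((\<lambda>x. p (- x)) has_real_derivative - p' (- x)) (at x)" for x
      using DERIV_mirror p by blast
    show "((\<lambda>x. - q (- x)) has_real_derivative q' (- x)) (at x)" for x
      using DERIV_mirror q DERIV_minus by fastforce
  qed (use assms in auto)
  then show ?thesis
  proof (intro monotone_onI)
    fix x y assume "strict_mono_on {-a..} (\<lambda>x. p (- x))" "x \<in> {..a}" "y \<in> {..a}" "x < y"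
    then show "p y < p x"
      using monotone_onD[of "{-a..}" "(<)" "(<)" "\<lambda>x. p (- x)" "- y" "- x"] by simp
  qed
qed

lemma log_derivative_has_real_derivative:
  fixes u u' u'' :: "real \<Rightarrow> real"
  assumes "(u has_real_derivative u' z) (at z)" and "(u' has_real_derivative u'' z) (at z)"
    and "u z \<noteq> 0"
  shows "((\<lambda>z. u' z / u z) has_real_derivative (u'' z * u z - u' z ^ 2) / u z ^ 2) (at z)"
  using assms by (auto intro!: derivative_eq_intros simp: power2_eq_square)

lemma tendsto_zero_at_bot_if_log_derivative_ge:
  fixes u u' :: "real \<Rightarrow> real"
  assumes u: "\<And>z. z \<le> t \<Longrightarrow> (u has_real_derivative u' z) (at z)"
    and pos: "\<And>z. z \<le> t \<Longrightarrow> u z > 0"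
    and log_growth: "\<And>z. z \<le> t \<Longrightarrow> c \<le> u' z / u z" and "c > 0"
  shows "(u \<longlongrightarrow> 0) at_bot"
proof (rule tendsto_sandwich)
  have mono_bound: "u z * exp (- c * z) \<le> u t * exp (- c * t)" if "z \<le> t" for z
  proof (rule deriv_nonneg_imp_mono[OF _ _ that])
    show "((\<lambda>z. u z * exp (- c * z)) has_real_derivative
        (u' x - c * u x) * exp (- c * x)) (at x)" if "x \<in> {z..t}" for x
      using that u[of x] by (auto intro!: derivative_eq_intros simp: algebra_simps)
    show "(u' x - c * u x) * exp (- c * x) \<ge> 0" if "x \<in> {z..t}" for x
      using that log_growth[of x] pos[of x] by (simp add: pos_le_divide_eq)
  qed
  then have "u z \<le> u t * exp (- c * t) * exp (c * z)" if "z \<le> t" for z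
  proof -
    have "u z = u z * exp (- c * z) * exp (c * z)"
      by (simp add: exp_minus field_simps)
    also have "\<dots> \<le> u t * exp (- c * t) * exp (c * z)"
      using mono_bound[OF that] by simp
    finally show ?thesis .
  qed
  then show "eventually (\<lambda>z. u z \<le> u t * exp (- c * t) * exp (c * z)) at_bot"
    by (auto simp: eventually_at_bot_linorder)
  show "eventually (\<lambda>z. 0 \<le> u z) at_bot"
    using pos unfolding eventually_at_bot_linorder by (meson less_imp_le)
  show "((\<lambda>z. u t * exp (- c * t) * exp (c * z)) \<longlongrightarrow> 0) at_bot"
    using \<open>c > 0\<close> by real_asymp
qed simp

lemma not_tendsto_zero_at_top_if_derivative_nonneg:
  fixes u u' :: "real \<Rightarrow> real"
  assumes u: "\<And>z. z \<ge> a \<Longrightarrow> (u has_real_derivative u' z) (at z)"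
    and u'_nonneg: "\<And>z. z \<ge> a \<Longrightarrow> u' z \<ge> 0" and "u a > 0"
  shows "\<not> (u \<longlongrightarrow> 0) at_top"
proof
  assume "(u \<longlongrightarrow> 0) at_top"
  then have "eventually (\<lambda>z. u z < u a) at_top"
    using \<open>u a > 0\<close> by (rule order_tendstoD)
  then obtain Z where "\<And>z. z \<ge> Z \<Longrightarrow> u z < u a"
    by (auto simp: eventually_at_top_linorder)
  then have "u (max a Z) < u a" by simp
  moreover have "u a \<le> u (max a Z)"
    by (rule deriv_nonneg_imp_mono[where g' = u']) (use u u'_nonneg in simp_all)
  ultimately show False by simp
qed

lemma log_derivative_numerator_has_real_derivative:
  fixes L :: real and u1 u2 u1' u2' u2'' :: "real \<Rightarrow> real"
  assumes d1: "\<And>z. (u1 has_real_derivative u1' z) (at z)"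
    and d2: "\<And>z. (u2 has_real_derivative u2' z) (at z)"
    and d2': "\<And>z. (u2' has_real_derivative u2'' z) (at z)"
    and ode: "\<And>z. - u2'' z + u2 z ^ 3 - u2 z + L * u1 z ^ 2 * u2 z = 0"
  shows "((\<lambda>z. u2'' z * u2 z - u2' z ^ 2) has_real_derivative
      2 * u2 z ^ 2 * (u2 z * u2' z + L * u1 z * u1' z)) (at z)"
proof -
  have u2'': "u2'' z = u2 z ^ 3 - u2 z + L * u1 z ^ 2 * u2 z" for z
    using ode[of z] by simp
  have "((\<lambda>z. (u2 z ^ 3 - u2 z + L * u1 z ^ 2 * u2 z) * u2 z - u2' z ^ 2) has_real_derivative
      2 * u2 z ^ 2 * (u2 z * u2' z + L * u1 z * u1' z)) (at z)"
    by (rule derivative_eq_intros d1 d2 d2' refl | simp)+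
      (simp add: u2'' power2_eq_square power3_eq_cube algebra_simps)
  then show ?thesis
    by (simp add: u2'')
qed

lemma log_derivative_strict_monotone:
  fixes L :: real and u1 u2 u1' u2' u2'' :: "real \<Rightarrow> real"
  assumes "L > 0"
    and d1: "\<And>z. (u1 has_real_derivative u1' z) (at z)"
    and d2: "\<And>z. (u2 has_real_derivative u2' z) (at z)"
    and d2': "\<And>z. (u2' has_real_derivative u2'' z) (at z)"
    and ode: "\<And>z. - u2'' z + u2 z ^ 3 - u2 z + L * u1 z ^ 2 * u2 z = 0"
    and u1_pos: "\<And>z. u1 z > 0" and u2_pos: "\<And>z. u2 z > 0" and u1'_pos: "\<And>z. u1' z > 0"
    and "u2' z0 \<ge> 0"
  shows "u2'' z0 * u2 z0 - u2' z0 ^ 2 \<ge> 0 \<Longrightarrow> strict_mono_on {z0..} (\<lambda>z. u2' z / u2 z)"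
    and "u2'' z0 * u2 z0 - u2' z0 ^ 2 \<le> 0 \<Longrightarrow> strict_antimono_on {..z0} (\<lambda>z. u2' z / u2 z)"
proof -
  define phi where "phi z = u2' z / u2 z" for z
  define N where "N z = u2'' z * u2 z - u2' z ^ 2" for z
  have u2_sq_pos: "u2 z ^ 2 > 0" for z
    using u2_pos[of z] by simp
  have phi_deriv: "(phi has_real_derivative N z / u2 z ^ 2) (at z)" for z
    unfolding phi_def[abs_def] N_def
    using d2 d2' u2_pos[of z] by (intro log_derivative_has_real_derivative) auto
  have N_deriv: "(N has_real_derivative 2 * u2 z ^ 2 * (u2 z * u2' z + L * u1 z * u1' z)) (at z)" for z
    unfolding N_def[abs_def] using d1 d2 d2' ode by (rule log_derivative_numerator_has_real_derivative)
  have N'_pos: "2 * u2 z ^ 2 * (u2 z * u2' z + L * u1 z * u1' z) > 0" if "phi z \<ge> 0" for z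
    using that u1_pos[of z] u2_pos[of z] u1'_pos[of z] \<open>L > 0\<close>
    by (simp add: phi_def zero_le_divide_iff add_nonneg_pos)
  have "phi z0 \<ge> 0"
    using \<open>u2' z0 \<ge> 0\<close> u2_pos[of z0] by (simp add: phi_def)
  show "strict_mono_on {z0..} phi" if "N z0 \<ge> 0"
    by (rule derivative_barrier_strict_mono_on[OF phi_deriv N_deriv _ N'_pos \<open>phi z0 \<ge> 0\<close> that])
      (use u2_sq_pos in \<open>auto intro: divide_pos_pos\<close>)
  show "strict_antimono_on {..z0} phi" if "N z0 \<le> 0"
    by (rule derivative_barrier_strict_antimono_on[OF phi_deriv N_deriv _ N'_pos \<open>phi z0 \<ge> 0\<close> that])
      (use u2_sq_pos in \<open>auto intro: divide_neg_pos\<close>)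
qed

lemma derivative_neg_if_other_derivative_pos:
  fixes L :: real and u1 u2 u1' u2' u2'' :: "real \<Rightarrow> real"
  assumes "L > 0"
    and d1: "\<And>z. (u1 has_real_derivative u1' z) (at z)"
    and d2: "\<And>z. (u2 has_real_derivative u2' z) (at z)"
    and d2': "\<And>z. (u2' has_real_derivative u2'' z) (at z)"
    and ode: "\<And>z. - u2'' z + u2 z ^ 3 - u2 z + L * u1 z ^ 2 * u2 z = 0"
    and u1_pos: "\<And>z. u1 z > 0" and u2_pos: "\<And>z. u2 z > 0" and u1'_pos: "\<And>z. u1' z > 0"
    and lim_bot: "(u2 \<longlongrightarrow> 1) at_bot" and lim_top: "(u2 \<longlongrightarrow> 0) at_top"
  shows "u2' z0 < 0"
proof (rule ccontr)
  assume "\<not> u2' z0 < 0"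
  then have "u2' z0 \<ge> 0" by simp
  define phi where "phi z = u2' z / u2 z" for z
  have phi_nonneg_iff: "phi z \<ge> 0 \<longleftrightarrow> u2' z \<ge> 0" for z
    using u2_pos[of z] by (simp add: phi_def zero_le_divide_iff)
  note phi_monotone = log_derivative_strict_monotone[OF \<open>L > 0\<close> d1 d2 d2' ode u1_pos u2_pos u1'_pos
      \<open>u2' z0 \<ge> 0\<close>, folded phi_def]
  have "phi z0 \<ge> 0"
    using \<open>u2' z0 \<ge> 0\<close> phi_nonneg_iff by simp
  consider "u2'' z0 * u2 z0 - u2' z0 ^ 2 \<ge> 0" | "u2'' z0 * u2 z0 - u2' z0 ^ 2 \<le> 0" by linarith
  then show False
  proof cases
    case 1
    then have "strict_mono_on {z0..} phi"
      by (rule phi_monotone(1))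
    then have "phi z0 \<le> phi z" if "z \<ge> z0" for z
      using that by (auto intro: strict_mono_on_leD)
    then have "u2' z \<ge> 0" if "z \<ge> z0" for z
      using that \<open>phi z0 \<ge> 0\<close> phi_nonneg_iff by (meson order_trans)
    then show False
      using not_tendsto_zero_at_top_if_derivative_nonneg d2 u2_pos lim_top by blast
  next
    case 2
    then have anti: "strict_antimono_on {..z0} phi"
      by (rule phi_monotone(2))
    have "phi z0 < phi (z0 - 1)"
      using monotone_onD[OF anti, of "z0 - 1" z0] by simp
    moreover have "phi (z0 - 1) \<le> phi z" if "z \<le> z0 - 1" for z
      using monotone_onD[OF anti, of z "z0 - 1"] that by (cases "z = z0 - 1") auto
    ultimately have "(u2 \<longlongrightarrow> 0) at_bot"
      using \<open>phi z0 \<ge> 0\<close> d2 u2_pos unfolding phi_def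
      by (intro tendsto_zero_at_bot_if_log_derivative_ge[where t = "z0 - 1"]) auto
    from tendsto_unique[OF trivial_limit_at_bot_linorder lim_bot this] show False
      by simp
  qed
qed

theorem lemma7p1:
  fixes \<Lambda> :: real
    and v1 v2 v1' v2' v1'' v2'' :: "real \<Rightarrow> real"
  assumes "\<Lambda> > 1"
    and "\<And>z. (v1 has_real_derivative v1' z) (at z)"
    and "\<And>z. (v2 has_real_derivative v2' z) (at z)"
    and "\<And>z. (v1' has_real_derivative v1'' z) (at z)"
    and "\<And>z. (v2' has_real_derivative v2'' z) (at z)"
    and "\<And>z. - v1'' z + v1 z ^ 3 - v1 z + \<Lambda> * v2 z ^ 2 * v1 z = 0"
    and "\<And>z. - v2'' z + v2 z ^ 3 - v2 z + \<Lambda> * v1 z ^ 2 * v2 z = 0"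
    and "\<And>z. v1 z > 0" and "\<And>z. v2 z > 0"
    and "(v1 \<longlongrightarrow> 0) at_bot" and "(v2 \<longlongrightarrow> 1) at_bot"
    and "(v1 \<longlongrightarrow> 1) at_top" and "(v2 \<longlongrightarrow> 0) at_top"
  shows "(\<forall>z. v1' z > 0) \<longleftrightarrow> (\<forall>z. v2' z < 0)"
proof
  assume "\<forall>z. v1' z > 0"
  then show "\<forall>z. v2' z < 0"
    using derivative_neg_if_other_derivative_pos[of \<Lambda> v1 v1' v2 v2' v2''] assms by simp
next
  assume v2'_neg: "\<forall>z. v2' z < 0"
  have "- v1' (- z) < 0" for z
  proof (rule derivative_neg_if_other_derivative_pos[of \<Lambda> "\<lambda>z. v2 (- z)" "\<lambda>z. - v2' (- z)"
        "\<lambda>z. v1 (- z)" "\<lambda>z. - v1' (- z)" "\<lambda>z. v1'' (- z)"])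
    show "((\<lambda>z. v2 (- z)) has_real_derivative - v2' (- z)) (at z)"
      and "((\<lambda>z. v1 (- z)) has_real_derivative - v1' (- z)) (at z)" for z
      using DERIV_mirror assms(2,3) by blast+
    show "((\<lambda>z. - v1' (- z)) has_real_derivative v1'' (- z)) (at z)" for z
      using DERIV_mirror assms(4) DERIV_minus by fastforce
    show "((\<lambda>z. v1 (- z)) \<longlongrightarrow> 1) at_bot"
      using assms(12) filterlim_uminus_at_top_at_bot by (rule filterlim_compose)
    show "((\<lambda>z. v1 (- z)) \<longlongrightarrow> 0) at_top"
      using assms(10) filterlim_uminus_at_bot_at_top by (rule filterlim_compose)
  qed (use assms v2'_neg in auto)
  then show "\<forall>z. v1' z > 0"
    by (metis minus_minus neg_less_0_iff_less)
qed

end
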